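(* Let $u, v, w \in \mathbb{N}^2$ be such that any two of $u, v, w$ are linearly independent. Then the submonoid $\mathbb{N}u+\mathbb{N}v+\mathbb{N}w$ of $\mathbb{N}^2$ generated by $u,v,w$ is isomorphic (as a monoid) to $\Lambda^{p,q,r}$ for some positive integers $p, q, r$.
   Context: $\mathbb{N}=\{0,1,2,\dots\}$. For positive integers $p,q,r$, $\Lambda^{p,q,r}=\langle a,b,c\mid pa+qb=rc\rangle$ is the quotient of the free commutative monoid $\mathbb{N}a\oplus\mathbb{N}b\oplus\mathbb{N}c$ by the congruence generated by $\lambda+pa+qb\sim\lambda+rc$ ($\lambda\in\mathbb{N}a\oplus\mathbb{N}b\oplus\mathbb{N}c$). *)

theory Defs
  imports Complex_Main
begin

type_synonym vec2 = "nat \<times> nat"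
type_synonym tri = "nat \<times> nat \<times> nat"

definition lin_indep2 :: "vec2 \<Rightarrow> vec2 \<Rightarrow> bool" where
  "lin_indep2 u v \<longleftrightarrow>
     (\<forall>a b :: real. a * real (fst u) + b * real (fst v) = 0 \<and>
                    a * real (snd u) + b * real (snd v) = 0 \<longrightarrow> a = 0 \<and> b = 0)"

definition vadd :: "vec2 \<Rightarrow> vec2 \<Rightarrow> vec2" where
  "vadd x y = (fst x + fst y, snd x + snd y)"

definition gen_submonoid :: "vec2 \<Rightarrow> vec2 \<Rightarrow> vec2 \<Rightarrow> vec2 set" where
  "gen_submonoid u v w =
     {(i * fst u + j * fst v + k * fst w, i * snd u + j * snd v + k * snd w) | i j k. True}"

text \<open>Free commutative monoid N a + N b + N c as triples, with addition.\<close>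
definition tadd :: "tri \<Rightarrow> tri \<Rightarrow> tri" where
  "tadd x y = (case x of (x1, x2, x3) \<Rightarrow> case y of (y1, y2, y3) \<Rightarrow> (x1 + y1, x2 + y2, x3 + y3))"

definition lam_base :: "nat \<Rightarrow> nat \<Rightarrow> nat \<Rightarrow> tri rel" where
  "lam_base p q r = {(tadd l (p, q, 0), tadd l (0, 0, r)) | l. True}"

text \<open>The congruence generated: the equivalence closure of the (translation-invariant)
  generating pairs.\<close>
definition lam_cong :: "nat \<Rightarrow> nat \<Rightarrow> nat \<Rightarrow> tri rel" where
  "lam_cong p q r = (lam_base p q r \<union> (lam_base p q r)\<inverse>)\<^sup>*"

definition Lam :: "nat \<Rightarrow> nat \<Rightarrow> nat \<Rightarrow> tri set set" where
  "Lam p q r = UNIV // lam_cong p q r"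

definition lam_zero :: "nat \<Rightarrow> nat \<Rightarrow> nat \<Rightarrow> tri set" where
  "lam_zero p q r = lam_cong p q r `` {(0, 0, 0)}"

definition lam_add :: "nat \<Rightarrow> nat \<Rightarrow> nat \<Rightarrow> tri set \<Rightarrow> tri set \<Rightarrow> tri set" where
  "lam_add p q r X Y = (\<Union>x\<in>X. \<Union>y\<in>Y. lam_cong p q r `` {tadd x y})"

definition lam_iso :: "nat \<Rightarrow> nat \<Rightarrow> nat \<Rightarrow> vec2 set \<Rightarrow> (tri set \<Rightarrow> vec2) \<Rightarrow> bool" where
  "lam_iso p q r S \<phi> \<longleftrightarrow>
     bij_betw \<phi> (Lam p q r) S \<and>
     \<phi> (lam_zero p q r) = (0, 0) \<and>
     (\<forall>X\<in>Lam p q r. \<forall>Y\<in>Lam p q r. \<phi> (lam_add p q r X Y) = vadd (\<phi> X) (\<phi> Y))"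

end

theory Submission
  imports Defs
begin

text \<open>The Cramer relation det(v,w) u + det(w,u) v + det(u,v) w = 0 has nonzero coefficients,
  which cannot all have the same sign since u, v, w lie in N^2. Hence one of the vectors, say w,
  satisfies a relation p u + q v = r w with p, q, r > 0, which we take primitive. As u and v are
  independent, every integer relation x u + y v = z w is then a multiple of (p, q, r). So two
  triples (i, j, k) have the same image i u + j v + k w exactly when they differ by a multiple of
  (p, q, -r), i.e. exactly when they are congruent in Lambda^{p,q,r}, and the map
  (i, j, k) \<mapsto> i u + j v + k w induces the isomorphism.\<close>

definition det2 :: "vec2 \<Rightarrow> vec2 \<Rightarrow> int" where
  "det2 a b = int (fst a) * int (snd b) - int (snd a) * int (fst b)"

lemma det2_swap: "det2 b a = - det2 a b"
  by (simp add: det2_def)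

lemma det2_zero_left [simp]: "det2 (0, 0) b = 0"
  by (simp add: det2_def)

lemma lin_indep2_imp_det2_nonzero:
  assumes "lin_indep2 a b"
  shows "det2 a b \<noteq> 0"
proof
  assume "det2 a b = 0"
  then have E: "real (fst a) * real (snd b) = real (snd a) * real (fst b)"
    unfolding det2_def by (metis eq_iff_diff_eq_0 of_int_of_nat_eq of_int_mult)
  note indep = assms[unfolded lin_indep2_def, rule_format]
  have "fst a = 0 \<and> fst b = 0"
    using indep[of "real (fst b)" "- real (fst a)"] E by (simp add: mult.commute)
  moreover have "snd a = 0 \<and> snd b = 0"
    using indep[of "real (snd b)" "- real (snd a)"] E by (simp add: mult.commute)
  ultimately show False
    using indep[of 1 0] by simp
qed

lemma det2_cramer:
  "det2 b c * int (fst a) + det2 c a * int (fst b) + det2 a b * int (fst c) = 0"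
  "det2 b c * int (snd a) + det2 c a * int (snd b) + det2 a b * int (snd c) = 0"
  unfolding det2_def by algebra+

definition positive_relation :: "vec2 \<Rightarrow> vec2 \<Rightarrow> vec2 \<Rightarrow> bool" where
  "positive_relation a b c \<longleftrightarrow>
     (\<exists>\<alpha> \<beta> \<gamma> :: int. 0 < \<alpha> \<and> 0 < \<beta> \<and> 0 < \<gamma> \<and>
        \<alpha> * int (fst a) + \<beta> * int (fst b) = \<gamma> * int (fst c) \<and>
        \<alpha> * int (snd a) + \<beta> * int (snd b) = \<gamma> * int (snd c))"

lemma positive_relation_if_sum_zero:
  fixes A B C :: int
  assumes "0 < A" "0 < B" "C \<noteq> 0" "c \<noteq> (0, 0)"
    and fst: "A * int (fst a) + B * int (fst b) + C * int (fst c) = 0"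
    and snd: "A * int (snd a) + B * int (snd b) + C * int (snd c) = 0"
  shows "positive_relation a b c"
proof -
  have "C < 0"
  proof (rule ccontr)
    assume "\<not> C < 0"
    then have "0 < C" using \<open>C \<noteq> 0\<close> by simp
    have "0 \<le> A * int (fst a)" "0 \<le> B * int (fst b)" "0 \<le> C * int (fst c)"
      "0 \<le> A * int (snd a)" "0 \<le> B * int (snd b)" "0 \<le> C * int (snd c)"
      using \<open>0 < A\<close> \<open>0 < B\<close> \<open>0 < C\<close> by simp_all
    then have "C * int (fst c) = 0" "C * int (snd c) = 0"
      using fst snd by linarith+
    then have "fst c = 0" "snd c = 0"
      using \<open>0 < C\<close> by simp_all
    with \<open>c \<noteq> (0, 0)\<close> show False by (simp add: prod_eq_iff)
  qed
  then show ?thesis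
    unfolding positive_relation_def using assms
    by (intro exI[of _ A] exI[of _ B] exI[of _ "- C"]) auto
qed

lemma positive_relation_if_det2_same_sign:
  assumes same_sign: "0 < det2 b c * det2 c a" and "det2 a b \<noteq> 0"
  shows "positive_relation a b c"
proof -
  have "c \<noteq> (0, 0)"
    using same_sign by auto
  show ?thesis
  proof (cases "0 < det2 b c")
    case True
    with same_sign have "0 < det2 c a" by (simp add: zero_less_mult_iff)
    with True show ?thesis
      using \<open>det2 a b \<noteq> 0\<close> \<open>c \<noteq> (0, 0)\<close> det2_cramer[of b c a]
      by (intro positive_relation_if_sum_zero[of "det2 b c" "det2 c a" "det2 a b"]) simp_all
  next
    case False
    with same_sign have "0 < - det2 b c" "0 < - det2 c a" by (auto simp: zero_less_mult_iff)
    moreover have "- det2 b c * int (fst a) + - det2 c a * int (fst b) + - det2 a b * int (fst c) = 0"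
      "- det2 b c * int (snd a) + - det2 c a * int (snd b) + - det2 a b * int (snd c) = 0"
      using det2_cramer[of b c a] by (simp_all add: algebra_simps)
    ultimately show ?thesis
      using \<open>det2 a b \<noteq> 0\<close> \<open>c \<noteq> (0, 0)\<close>
      by (intro positive_relation_if_sum_zero[of "- det2 b c" "- det2 c a" "- det2 a b"]) simp_all
  qed
qed

lemma positive_relation_primitive:
  assumes "positive_relation a b c"
  obtains p q r :: nat where "0 < p" "0 < q" "0 < r"
    and "gcd (int p) (gcd (int q) (int r)) = 1"
    and "p * fst a + q * fst b = r * fst c" "p * snd a + q * snd b = r * snd c"
proof -
  obtain \<alpha> \<beta> \<gamma> :: int where pos: "0 < \<alpha>" "0 < \<beta>" "0 < \<gamma>"
    and rel: "\<alpha> * int (fst a) + \<beta> * int (fst b) = \<gamma> * int (fst c)"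
      "\<alpha> * int (snd a) + \<beta> * int (snd b) = \<gamma> * int (snd c)"
    using assms unfolding positive_relation_def by blast
  define g where "g = gcd \<alpha> (gcd \<beta> \<gamma>)"
  have "0 < g" using pos by (simp add: g_def)
  obtain P Q R where PQR: "\<alpha> = g * P" "\<beta> = g * Q" "\<gamma> = g * R"
    unfolding g_def by (meson dvd_def dvd_trans gcd_dvd1 gcd_dvd2)
  have "0 < P" "0 < Q" "0 < R"
    using pos PQR \<open>0 < g\<close> by (auto simp: zero_less_mult_iff)
  have "g * gcd P (gcd Q R) = gcd (g * P) (g * gcd Q R)"
    using gcd_mult_distrib_int[of g P "gcd Q R"] \<open>0 < g\<close> by simp
  also have "\<dots> = gcd \<alpha> (gcd \<beta> \<gamma>)"
    using gcd_mult_distrib_int[of g Q R] \<open>0 < g\<close> by (simp add: PQR)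
  also have "\<dots> = g * 1"
    by (simp add: g_def)
  finally have coprime: "gcd P (gcd Q R) = 1"
    using \<open>0 < g\<close> by simp
  have "g * (P * int (fst a) + Q * int (fst b)) = g * (R * int (fst c))"
    "g * (P * int (snd a) + Q * int (snd b)) = g * (R * int (snd c))"
    using rel unfolding PQR by (simp_all add: algebra_simps)
  then have "P * int (fst a) + Q * int (fst b) = R * int (fst c)"
    "P * int (snd a) + Q * int (snd b) = R * int (snd c)"
    using \<open>0 < g\<close> by simp_all
  then have "int (nat P * fst a + nat Q * fst b) = int (nat R * fst c)"
    "int (nat P * snd a + nat Q * snd b) = int (nat R * snd c)"
    using \<open>0 < P\<close> \<open>0 < Q\<close> \<open>0 < R\<close> by simp_all
  then have "nat P * fst a + nat Q * fst b = nat R * fst c"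
    "nat P * snd a + nat Q * snd b = nat R * snd c"
    by (simp_all only: of_nat_eq_iff)
  with coprime \<open>0 < P\<close> \<open>0 < Q\<close> \<open>0 < R\<close> show ?thesis
    by (intro that[of "nat P" "nat Q" "nat R"]) simp_all
qed

lemma int_relation_multiple_of_primitive:
  fixes x y z :: int
  assumes "det2 a b \<noteq> 0" "0 < r" "gcd (int p) (gcd (int q) (int r)) = 1"
    and prim: "p * fst a + q * fst b = r * fst c" "p * snd a + q * snd b = r * snd c"
    and rel: "x * int (fst a) + y * int (fst b) = z * int (fst c)"
      "x * int (snd a) + y * int (snd b) = z * int (snd c)"
  shows "\<exists>t. x = t * int p \<and> y = t * int q \<and> z = t * int r"
proof -
  have prim_int: "int p * int (fst a) + int q * int (fst b) = int r * int (fst c)"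
    "int p * int (snd a) + int q * int (snd b) = int r * int (snd c)"
    using prim by (metis of_nat_add of_nat_mult)+
  have "(x * int r - z * int p) * det2 a b = 0" "(y * int r - z * int q) * det2 a b = 0"
    using rel prim_int unfolding det2_def by algebra+
  then have xr: "x * int r = z * int p" and yr: "y * int r = z * int q"
    using \<open>det2 a b \<noteq> 0\<close> by simp_all
  obtain s1 s23 where "s1 * int p + s23 * gcd (int q) (int r) = 1"
    using bezout_int[of "int p" "gcd (int q) (int r)"] \<open>gcd (int p) (gcd (int q) (int r)) = 1\<close>
    by metis
  moreover obtain s2 s3 where "s2 * int q + s3 * int r = gcd (int q) (int r)"
    using bezout_int by blast
  ultimately have bezout: "s1 * int p + s23 * s2 * int q + s23 * s3 * int r = 1"
    by (simp add: algebra_simps flip: distrib_left)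
  define t where "t = s1 * x + s23 * s2 * y + s23 * s3 * z"
  have "t * int r = z * (s1 * int p + s23 * s2 * int q + s23 * s3 * int r)"
    unfolding t_def using xr yr by algebra
  then have tr: "t * int r = z"
    by (simp add: bezout)
  have "x * int r = (t * int p) * int r" "y * int r = (t * int q) * int r"
    using xr yr tr by (simp_all add: algebra_simps)
  then have "x = t * int p" "y = t * int q"
    using \<open>0 < r\<close> by simp_all
  with tr show ?thesis by (auto simp: mult.commute)
qed

lemma gen_submonoid_rotate: "gen_submonoid a b c = gen_submonoid b c a"
proof -
  have "gen_submonoid a b c \<subseteq> gen_submonoid b c a" for a b c
    unfolding gen_submonoid_def
    by (auto; rule_tac x=j in exI, rule_tac x=k in exI, rule_tac x=i in exI, simp add: ac_simps)
  then show ?thesis by blast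
qed

definition gen_map :: "vec2 \<Rightarrow> vec2 \<Rightarrow> vec2 \<Rightarrow> tri \<Rightarrow> vec2" where
  "gen_map a b c = (\<lambda>(i, j, k).
     (i * fst a + j * fst b + k * fst c, i * snd a + j * snd b + k * snd c))"

lemma range_gen_map: "range (gen_map a b c) = gen_submonoid a b c"
  unfolding gen_map_def gen_submonoid_def image_def by auto

lemma gen_map_tadd: "gen_map a b c (tadd x y) = vadd (gen_map a b c x) (gen_map a b c y)"
  by (cases x; cases y) (simp add: gen_map_def tadd_def vadd_def algebra_simps)

lemma gen_map_zero: "gen_map a b c (0, 0, 0) = (0, 0)"
  by (simp add: gen_map_def)

lemma sym_lam_cong: "sym (lam_cong p q r)"
  unfolding lam_cong_def by (intro sym_rtrancl sym_Un_converse)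

lemma lam_cong_shift: "((x1, x2, x3 + n * r), (x1 + n * p, x2 + n * q, x3)) \<in> lam_cong p q r"
proof (induction n arbitrary: x1 x2)
  case 0
  show ?case by (simp add: lam_cong_def)
next
  case (Suc n)
  have "(tadd (x1, x2, x3 + n * r) (p, q, 0), tadd (x1, x2, x3 + n * r) (0, 0, r))
      \<in> lam_base p q r"
    unfolding lam_base_def by blast
  then have "((x1 + p, x2 + q, x3 + n * r), (x1, x2, x3 + Suc n * r)) \<in> lam_base p q r"
    by (simp add: tadd_def algebra_simps)
  then have "((x1, x2, x3 + Suc n * r), (x1 + p, x2 + q, x3 + n * r)) \<in> lam_cong p q r"
    unfolding lam_cong_def by (intro r_into_rtrancl) blast
  then have "((x1, x2, x3 + Suc n * r), (x1 + p + n * p, x2 + q + n * q, x3)) \<in> lam_cong p q r"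
    using Suc.IH[of "x1 + p" "x2 + q"] unfolding lam_cong_def by (rule rtrancl_trans)
  then show ?case by (simp add: algebra_simps)
qed

lemma lam_cong_if_int_multiple:
  assumes "int x1 - int y1 = t * int p" "int x2 - int y2 = t * int q" "int y3 - int x3 = t * int r"
  shows "((x1, x2, x3), (y1, y2, y3)) \<in> lam_cong p q r"
proof (cases "0 \<le> t")
  case True
  then obtain n where "t = int n" by (rule nonneg_int_cases)
  with assms have "int x1 = int (y1 + n * p)" "int x2 = int (y2 + n * q)" "int y3 = int (x3 + n * r)"
    by (simp_all add: algebra_simps)
  then have "x1 = y1 + n * p" "x2 = y2 + n * q" "y3 = x3 + n * r"
    by (simp_all only: of_nat_eq_iff)
  then have "((y1, y2, y3), (x1, x2, x3)) \<in> lam_cong p q r"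
    using lam_cong_shift[of y1 y2 x3 n r p q] by simp
  then show ?thesis using sym_lam_cong by (rule symD[rotated])
next
  case False
  then have "0 \<le> - t" by simp
  then obtain n where "- t = int n" by (rule nonneg_int_cases)
  then have "t = - int n" by simp
  with assms have "int y1 = int (x1 + n * p)" "int y2 = int (x2 + n * q)" "int x3 = int (y3 + n * r)"
    by (simp_all add: algebra_simps)
  then have "y1 = x1 + n * p" "y2 = x2 + n * q" "x3 = y3 + n * r"
    by (simp_all only: of_nat_eq_iff)
  then show ?thesis
    using lam_cong_shift[of x1 x2 y3 n r p q] by simp
qed

lemma lam_cong_imp_eq:
  fixes F :: "tri \<Rightarrow> 'a"
  assumes respects: "\<And>l. F (tadd l (p, q, 0)) = F (tadd l (0, 0, r))"
    and "(x, y) \<in> lam_cong p q r"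
  shows "F x = F y"
proof -
  have base: "F u = F v" if "(u, v) \<in> lam_base p q r" for u v
  proof -
    from that obtain l where "u = tadd l (p, q, 0)" "v = tadd l (0, 0, r)"
      unfolding lam_base_def by blast
    then show ?thesis by (simp add: respects)
  qed
  from assms(2) show ?thesis
    unfolding lam_cong_def
  proof (induction rule: rtrancl_induct)
    case base
    show ?case by simp
  next
    case (step y z)
    from step.hyps(2) have "F y = F z"
      using base[of y z] base[of z y] by (metis UnE converseD)
    with step.IH show ?case by simp
  qed
qed

lemma lam_iso_if_kernel:
  fixes F :: "tri \<Rightarrow> vec2"
  assumes add: "\<And>x y. F (tadd x y) = vadd (F x) (F y)"
    and zero: "F (0, 0, 0) = (0, 0)"
    and kernel: "\<And>x y. (x, y) \<in> lam_cong p q r \<longleftrightarrow> F x = F y"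
  shows "lam_iso p q r (range F) (\<lambda>X. F (SOME x. x \<in> X))"
proof -
  define \<phi> where "\<phi> X = F (SOME x. x \<in> X)" for X :: "tri set"
  define cls where "cls z = F -` {F z}" for z
  have class_eq: "lam_cong p q r `` {z} = cls z" for z
    unfolding cls_def Image_def using kernel by (auto simp del: split_paired_All)
  have Lam_eq: "Lam p q r = range cls"
    unfolding Lam_def quotient_def class_eq by blast
  have \<phi>_cls: "\<phi> (cls z) = F z" for z
  proof -
    have "z \<in> cls z" by (simp add: cls_def)
    then have "(SOME x. x \<in> cls z) \<in> cls z" by (rule someI)
    then show ?thesis by (simp add: \<phi>_def cls_def)
  qed
  have "bij_betw \<phi> (Lam p q r) (range F)"
    unfolding Lam_eq
  proof (rule bij_betw_imageI)
    show "inj_on \<phi> (range cls)"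
    proof (rule inj_onI)
      fix X Y assume "X \<in> range cls" "Y \<in> range cls" "\<phi> X = \<phi> Y"
      then obtain x y where "X = cls x" "Y = cls y" "F x = F y"
        by (auto simp: \<phi>_cls)
      then show "X = Y" by (simp add: cls_def)
    qed
    show "\<phi> ` range cls = range F"
      by (simp add: image_image \<phi>_cls)
  qed
  moreover have "\<phi> (lam_zero p q r) = (0, 0)"
    unfolding lam_zero_def class_eq \<phi>_cls by (rule zero)
  moreover have "\<phi> (lam_add p q r X Y) = vadd (\<phi> X) (\<phi> Y)"
    if "X \<in> Lam p q r" "Y \<in> Lam p q r" for X Y
  proof -
    from that obtain x y where XY: "X = cls x" "Y = cls y"
      unfolding Lam_eq by blast
    have "cls (tadd x' y') = cls (tadd x y)" if "x' \<in> cls x" "y' \<in> cls y" for x' y'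
      using that by (simp add: cls_def add)
    moreover have "x \<in> cls x" "y \<in> cls y" by (simp_all add: cls_def)
    ultimately have "lam_add p q r X Y = cls (tadd x y)"
      unfolding lam_add_def class_eq XY by blast
    then show ?thesis by (simp add: XY \<phi>_cls add)
  qed
  ultimately show ?thesis
    unfolding lam_iso_def \<phi>_def by blast
qed

lemma lam_cong_iff_gen_map_eq:
  assumes "det2 a b \<noteq> 0" "0 < r" "gcd (int p) (gcd (int q) (int r)) = 1"
    and prim: "p * fst a + q * fst b = r * fst c" "p * snd a + q * snd b = r * snd c"
  shows "(x, y) \<in> lam_cong p q r \<longleftrightarrow> gen_map a b c x = gen_map a b c y"
proof
  assume "(x, y) \<in> lam_cong p q r"
  moreover have "gen_map a b c (tadd l (p, q, 0)) = gen_map a b c (tadd l (0, 0, r))" for l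
    unfolding gen_map_tadd using prim by (simp add: gen_map_def)
  ultimately show "gen_map a b c x = gen_map a b c y"
    by (rule lam_cong_imp_eq[rotated])
next
  obtain x1 x2 x3 y1 y2 y3 where xy: "x = (x1, x2, x3)" "y = (y1, y2, y3)"
    by (cases x, cases y) auto
  assume "gen_map a b c x = gen_map a b c y"
  then have "int (x1 * fst a + x2 * fst b + x3 * fst c) = int (y1 * fst a + y2 * fst b + y3 * fst c)"
    "int (x1 * snd a + x2 * snd b + x3 * snd c) = int (y1 * snd a + y2 * snd b + y3 * snd c)"
    by (simp_all add: gen_map_def xy)
  then have "(int x1 - int y1) * int (fst a) + (int x2 - int y2) * int (fst b)
      = (int y3 - int x3) * int (fst c)"
    "(int x1 - int y1) * int (snd a) + (int x2 - int y2) * int (snd b)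
      = (int y3 - int x3) * int (snd c)"
    by (simp_all add: algebra_simps)
  then obtain t where "int x1 - int y1 = t * int p" "int x2 - int y2 = t * int q"
    "int y3 - int x3 = t * int r"
    using int_relation_multiple_of_primitive[OF assms] by blast
  then show "(x, y) \<in> lam_cong p q r"
    unfolding xy by (rule lam_cong_if_int_multiple)
qed

lemma lam_iso_gen_submonoid_if_positive_relation:
  assumes "det2 a b \<noteq> 0" "positive_relation a b c"
  shows "\<exists>p q r :: nat. p > 0 \<and> q > 0 \<and> r > 0 \<and>
           (\<exists>\<phi>. lam_iso p q r (gen_submonoid a b c) \<phi>)"
proof -
  obtain p q r where pos: "0 < p" "0 < q" "0 < r"
    and prim: "gcd (int p) (gcd (int q) (int r)) = 1"
      "p * fst a + q * fst b = r * fst c" "p * snd a + q * snd b = r * snd c"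
    using positive_relation_primitive[OF assms(2)] by blast
  have "lam_iso p q r (range (gen_map a b c)) (\<lambda>X. gen_map a b c (SOME x. x \<in> X))"
    using lam_cong_iff_gen_map_eq[OF assms(1) \<open>0 < r\<close> prim]
    by (intro lam_iso_if_kernel gen_map_tadd gen_map_zero)
  with pos show ?thesis
    unfolding range_gen_map by blast
qed

theorem proposition3p1:
  fixes u v w :: "nat \<times> nat"
  assumes "lin_indep2 u v" and "lin_indep2 u w" and "lin_indep2 v w"
  shows "\<exists>p q r :: nat. p > 0 \<and> q > 0 \<and> r > 0 \<and>
           (\<exists>\<phi>. lam_iso p q r (gen_submonoid u v w) \<phi>)"
proof -
  have "det2 u v \<noteq> 0" "det2 v w \<noteq> 0" "det2 w u \<noteq> 0"
    using assms lin_indep2_imp_det2_nonzero by (auto simp: det2_swap[of w u])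
  then have "0 < det2 v w * det2 w u \<or> 0 < det2 w u * det2 u v \<or> 0 < det2 u v * det2 v w"
    by (auto simp: zero_less_mult_iff)
  then have "positive_relation u v w \<or> positive_relation v w u \<or> positive_relation w u v"
    using \<open>det2 u v \<noteq> 0\<close> \<open>det2 v w \<noteq> 0\<close> \<open>det2 w u \<noteq> 0\<close>
    by (auto intro: positive_relation_if_det2_same_sign)
  then show ?thesis
    using lam_iso_gen_submonoid_if_positive_relation
      \<open>det2 u v \<noteq> 0\<close> \<open>det2 v w \<noteq> 0\<close> \<open>det2 w u \<noteq> 0\<close>
      gen_submonoid_rotate[of u v w] gen_submonoid_rotate[of v w u]
    by metis
qed

end
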